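(* For every fixed $n\ge1$, the function $f(x)=\mu(N_n(x)\ge1)$, $x\in\mathbb{N}$, is non-increasing in $x$.
   Context: $\mu$ is the Gauss measure on $(0,1)$, $d\mu(\omega)=\frac{d\omega}{(\log 2)(1+\omega)}$. For irrational $\omega\in(0,1)$, $a_i(\omega)$ denote its continued fraction partial quotients, and $N_n(x)=N_n(x,\omega)=\#\{1\le i\le n: a_i(\omega)=x\}$. *)

theory Defs
  imports "HOL-Analysis.Analysis"
begin

definition gauss_measure :: "real measure" where
  "gauss_measure = density lborel
     (\<lambda>w. ennreal (indicator {0<..<1} w / (ln 2 * (1 + w))))"

definition gauss_map :: "real \<Rightarrow> real" where
  "gauss_map w = frac (1 / w)"

definition cf_digit :: "nat \<Rightarrow> real \<Rightarrow> nat" where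
  "cf_digit i w = nat \<lfloor>1 / (gauss_map ^^ (i - 1)) w\<rfloor>"

definition N_count :: "nat \<Rightarrow> nat \<Rightarrow> real \<Rightarrow> nat" where
  "N_count n x w = card {i \<in> {1..n}. cf_digit i w = x}"

end

theory Submission
  imports Defs
begin

text \<open>
  A density of the form \<open>1 / ((p w + q) (r w + s))\<close> is pulled back by the inverse branch
  \<open>t \<mapsto> 1 / (b + t)\<close> of the Gauss map to a density of the same form in \<open>t\<close>,
  which decreases as \<open>b\<close> grows; the Gauss density is the case \<open>(0, ln 2, 1, 1)\<close>.
  Splitting the event ``\<open>z\<close> occurs among the first \<open>n + 1\<close> digits'' according to the first
  digit \<open>b\<close> gives the integral of the full density on the branch \<open>b = z\<close> and the integral of
  the pulled-back density over ``\<open>z\<close> occurs among \<open>n\<close> digits'' on every other branch.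
  For \<open>x \<le> y\<close>, the induction hypothesis replaces \<open>y\<close> by \<open>x\<close> on every branch \<open>b \<noteq> y\<close>;
  what remains is to exchange the roles of the branches \<open>x\<close> and \<open>y\<close>, and this can only
  increase the total because the full density exceeds the restricted one by the density
  of the complementary event, which is larger on the branch \<open>x\<close> than on the branch \<open>y\<close>.
\<close>

definition irrationals_01 :: "real set" where
  "irrationals_01 = {0<..<1} - \<rat>"

lemma irrationals_01_iff: "w \<in> irrationals_01 \<longleftrightarrow> 0 < w \<and> w < 1 \<and> w \<notin> \<rat>"
  by (auto simp: irrationals_01_def)

lemma irrationals_01_sets [measurable]: "irrationals_01 \<in> sets borel"
proof -
  have "\<rat> \<in> sets (borel :: real measure)"
    by (rule sets.countable) (auto simp: countable_rat)
  then show ?thesis unfolding irrationals_01_def by auto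
qed

lemma Rats_one_divide_iff: "1 / (x::real) \<in> \<rat> \<longleftrightarrow> x \<in> \<rat>"
  using Rats_inverse_iff[of x] by (simp add: inverse_eq_divide)

fun digit_occurs :: "nat \<Rightarrow> nat \<Rightarrow> real \<Rightarrow> bool" where
  "digit_occurs 0 z w = False"
| "digit_occurs (Suc n) z w = (nat \<lfloor>1 / w\<rfloor> = z \<or> digit_occurs n z (gauss_map w))"

lemma cf_digit_Suc: "i \<ge> 1 \<Longrightarrow> cf_digit (Suc i) w = cf_digit i (gauss_map w)"
  unfolding cf_digit_def by (metis Suc_diff_le diff_Suc_1 funpow_Suc_right o_apply)

lemma digit_occurs_iff: "digit_occurs n z w \<longleftrightarrow> (\<exists>i\<in>{1..n}. cf_digit i w = z)"
proof (induction n arbitrary: w)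
  case 0
  then show ?case by simp
next
  case (Suc n)
  have "{1..Suc n} = insert 1 (Suc ` {1..n})"
    by (simp add: Icc_eq_insert_lb_nat image_Suc_atLeastAtMost)
  then have "(\<exists>i\<in>{1..Suc n}. cf_digit i w = z)
      \<longleftrightarrow> cf_digit 1 w = z \<or> (\<exists>i\<in>{1..n}. cf_digit (Suc i) w = z)"
    by (simp only:) blast
  also have "\<dots> \<longleftrightarrow> nat \<lfloor>1 / w\<rfloor> = z \<or> (\<exists>i\<in>{1..n}. cf_digit i (gauss_map w) = z)"
    by (simp add: cf_digit_Suc) (simp add: cf_digit_def)
  finally show ?case using Suc by simp
qed

lemma N_count_ge_1_iff: "N_count n z w \<ge> 1 \<longleftrightarrow> digit_occurs n z w"
  unfolding N_count_def digit_occurs_iff by (auto simp: Suc_le_eq card_gt_0_iff)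

lemma gauss_map_measurable [measurable]: "gauss_map \<in> borel_measurable borel"
  unfolding gauss_map_def frac_def by measurable

lemma digit_occurs_sets [measurable]: "{w. digit_occurs n z w} \<in> sets borel"
proof (induction n)
  case 0
  then show ?case by simp
next
  case (Suc n)
  have "{w. digit_occurs (Suc n) z w} = {w. nat \<lfloor>1 / w\<rfloor> = z} \<union> gauss_map -` {w. digit_occurs n z w}"
    by auto
  moreover have "gauss_map -` {w. digit_occurs n z w} \<in> sets borel"
    using measurable_sets_borel[OF gauss_map_measurable Suc] by simp
  ultimately show ?case by simp
qed

lemma irrationals_01_first_digit_iff:
  assumes "w \<in> irrationals_01" and "k \<ge> 1"
  shows "w \<in> {1 / (real k + 1)..1 / real k} \<longleftrightarrow> nat \<lfloor>1 / w\<rfloor> = k"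
proof -
  have w: "0 < w" "w < 1" "1 / w \<notin> \<rat>"
    using assms(1) by (auto simp: irrationals_01_iff Rats_one_divide_iff)
  then have "1 / w \<noteq> real k" "1 / w \<noteq> real k + 1"
    by (metis Rats_of_nat, metis Rats_of_nat of_nat_Suc add.commute)
  moreover have "w \<le> 1 / real k \<longleftrightarrow> real k \<le> 1 / w" "1 / (real k + 1) \<le> w \<longleftrightarrow> 1 / w \<le> real k + 1"
    using w assms(2) by (simp_all add: field_simps)
  ultimately have "w \<in> {1 / (real k + 1)..1 / real k} \<longleftrightarrow> real k < 1 / w \<and> 1 / w < real k + 1"
    by auto
  also have "\<dots> \<longleftrightarrow> \<lfloor>1 / w\<rfloor> = int k"
    using \<open>1 / w \<noteq> real k\<close> by (auto simp: floor_eq_iff)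
  also have "\<dots> \<longleftrightarrow> nat \<lfloor>1 / w\<rfloor> = k"
    using assms(2) by auto
  finally show ?thesis .
qed

lemma inverse_branch_irrationals_01_iff:
  assumes "t \<in> {0..1}"
  shows "1 / (real (Suc b) + t) \<in> irrationals_01 \<longleftrightarrow> t \<in> irrationals_01"
proof -
  have "real (Suc b) + t \<in> \<rat> \<longleftrightarrow> t \<in> \<rat>"
    by (metis Rats_add Rats_diff Rats_of_nat add_diff_cancel_left')
  moreover have "0 < 1 / (real (Suc b) + t)" "0 < t \<Longrightarrow> 1 / (real (Suc b) + t) < 1"
    using assms by (auto simp: field_simps)
  moreover have "t \<noteq> 0" "t \<noteq> 1" if "t \<notin> \<rat>"
    using that by auto
  ultimately show ?thesis
    using assms by (auto simp: irrationals_01_iff Rats_one_divide_iff)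
qed

lemma inverse_branch_digit_occurs_Suc_iff:
  assumes "0 < t" "t < 1"
  shows "digit_occurs (Suc n) z (1 / (real (Suc b) + t)) \<longleftrightarrow> Suc b = z \<or> digit_occurs n z t"
proof -
  have floor: "\<lfloor>real (Suc b) + t\<rfloor> = int (Suc b)"
    using assms by (simp add: floor_eq_iff)
  then have "gauss_map (1 / (real (Suc b) + t)) = t"
    using assms by (simp add: gauss_map_def frac_def)
  moreover have "nat \<lfloor>1 / (1 / (real (Suc b) + t))\<rfloor> = Suc b"
    using floor by (metis div_by_1 divide_divide_eq_right mult_1 nat_int)
  ultimately show ?thesis by simp
qed

lemma nn_integral_inverse_branch:
  fixes F :: "real \<Rightarrow> real" and B :: real
  assumes B: "B \<ge> 1" and F [measurable]: "F \<in> borel_measurable borel"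
  shows "(\<integral>\<^sup>+ w. ennreal (F w * indicator {1 / (B + 1)..1 / B} w) \<partial>lborel)
       = (\<integral>\<^sup>+ t. ennreal (F (1 / (B + t)) / (B + t)\<^sup>2 * indicator {0..1} t) \<partial>lborel)"
proof -
  let ?g = "\<lambda>s. 1 / (B + 1 - s)"
  have deriv: "(?g has_real_derivative 1 / (B + 1 - s)\<^sup>2) (at s)" if "s \<in> {0..1}" for s
    using that B by (auto intro!: derivative_eq_intros simp: power2_eq_square)
  have "set_borel_measurable borel {?g 0..?g 1} F"
    unfolding set_borel_measurable_def by measurable
  then have "(\<integral>\<^sup>+ w. ennreal (F w * indicator {?g 0..?g 1} w) \<partial>lborel)
      = (\<integral>\<^sup>+ s. ennreal (F (?g s) * (1 / (B + 1 - s)\<^sup>2) * indicator {0..1} s) \<partial>lborel)"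
    using B by (intro nn_integral_substitution deriv continuous_intros) auto
  also have "\<dots> = ennreal \<bar>-1\<bar> * (\<integral>\<^sup>+ t. ennreal (F (?g (1 + (-1) * t))
      * (1 / (B + 1 - (1 + (-1) * t))\<^sup>2) * indicator {0..1} (1 + (-1) * t)) \<partial>lborel)"
    by (rule nn_integral_real_affine) simp_all
  also have "\<dots> = (\<integral>\<^sup>+ t. ennreal (F (1 / (B + t)) / (B + t)\<^sup>2 * indicator {0..1} t) \<partial>lborel)"
    by (auto intro!: nn_integral_cong simp: indicator_def algebra_simps)
  finally show ?thesis by simp
qed

lemma nn_integral_first_digit_decomposition:
  fixes F :: "real \<Rightarrow> real"
  assumes F [measurable]: "F \<in> borel_measurable borel"
    and nonneg: "\<And>w. F w \<ge> 0" and vanish: "\<And>w. w \<notin> irrationals_01 \<Longrightarrow> F w = 0"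
  shows "(\<integral>\<^sup>+ w. ennreal (F w) \<partial>lborel)
    = (\<Sum>b. \<integral>\<^sup>+ t. ennreal (F (1 / (real (Suc b) + t)) / (real (Suc b) + t)\<^sup>2
                     * indicator {0..1} t) \<partial>lborel)"
proof -
  let ?I = "\<lambda>b::nat. {1 / (real (Suc b) + 1)..1 / real (Suc b)}"
  have pointwise: "ennreal (F w) = (\<Sum>b. ennreal (F w * indicator (?I b) w))" for w
  proof (cases "w \<in> irrationals_01")
    case False
    then show ?thesis using vanish by simp
  next
    case True
    define m where "m = nat \<lfloor>1 / w\<rfloor> - 1"
    have "1 < 1 / w" using True by (simp add: irrationals_01_iff field_simps)
    then have "1 \<le> nat \<lfloor>1 / w\<rfloor>" by linarith
    then have "w \<in> ?I b \<longleftrightarrow> b = m" for b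
      using irrationals_01_first_digit_iff[OF True, of "Suc b"] unfolding m_def by auto
    then have "(\<lambda>b. ennreal (F w * indicator (?I b) w)) = (\<lambda>b. if b = m then ennreal (F w) else 0)"
      by (auto simp: indicator_def)
    then show ?thesis using sums_unique[OF sums_single[of m "\<lambda>_. ennreal (F w)"]] by simp
  qed
  have "(\<integral>\<^sup>+ w. ennreal (F w) \<partial>lborel) = (\<Sum>b. \<integral>\<^sup>+ w. ennreal (F w * indicator (?I b) w) \<partial>lborel)"
    unfolding pointwise by (rule nn_integral_suminf) measurable
  also have "\<dots> = (\<Sum>b. \<integral>\<^sup>+ t. ennreal (F (1 / (real (Suc b) + t)) / (real (Suc b) + t)\<^sup>2
                     * indicator {0..1} t) \<partial>lborel)"
    by (intro arg_cong[where f = suminf] ext nn_integral_inverse_branch) auto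
  finally show ?thesis .
qed

lemma suminf_ennreal_split2:
  fixes f :: "nat \<Rightarrow> ennreal"
  assumes "i \<noteq> j"
  shows "suminf f = f i + f j + (\<Sum>b. if b = i \<or> b = j then 0 else f b)"
proof -
  have "suminf f = (\<Sum>b. (if b = i \<or> b = j then f b else 0) + (if b = i \<or> b = j then 0 else f b))"
    by (rule arg_cong[where f = suminf]) auto
  also have "\<dots> = (\<Sum>b. if b = i \<or> b = j then f b else 0) + (\<Sum>b. if b = i \<or> b = j then 0 else f b)"
    by (rule suminf_add[symmetric]) (auto intro: summableI)
  also have "(\<Sum>b. if b = i \<or> b = j then f b else 0) = (\<Sum>b\<in>{i, j}. if b = i \<or> b = j then f b else 0)"
    by (rule suminf_finite) auto
  finally show ?thesis using assms by simp
qed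

definition cf_density :: "real \<Rightarrow> real \<Rightarrow> real \<Rightarrow> real \<Rightarrow> real \<Rightarrow> real" where
  "cf_density p q r s w = 1 / ((p * w + q) * (r * w + s))"

lemma cf_density_pos:
  "0 \<le> p \<Longrightarrow> 0 < q \<Longrightarrow> 0 \<le> r \<Longrightarrow> 0 < s \<Longrightarrow> 0 \<le> w \<Longrightarrow> cf_density p q r s w > 0"
  unfolding cf_density_def by (intro divide_pos_pos mult_pos_pos add_nonneg_pos mult_nonneg_nonneg) simp_all

lemma cf_density_inverse_branch:
  assumes "0 \<le> p" "0 < q" "0 \<le> r" "0 < s" "0 < B" "0 \<le> t"
  shows "cf_density p q r s (1 / (B + t)) / (B + t)\<^sup>2 = cf_density q (p + q * B) s (r + s * B) t"
proof -
  let ?u = "B + t"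
  have u: "0 < ?u" using assms by simp
  have "p + q * ?u > 0" "r + s * ?u > 0"
    using assms u by (auto intro: add_nonneg_pos)
  moreover have "p * (1 / ?u) + q = (p + q * ?u) / ?u" "r * (1 / ?u) + s = (r + s * ?u) / ?u"
    using u by (simp_all add: field_simps)
  ultimately have "cf_density p q r s (1 / ?u) / ?u\<^sup>2 = 1 / ((p + q * ?u) * (r + s * ?u))"
    using u unfolding cf_density_def by (simp add: power2_eq_square)
  then show ?thesis
    unfolding cf_density_def by (simp add: algebra_simps)
qed

lemma cf_density_shift_antimono:
  assumes "0 \<le> p" "0 < q" "0 \<le> r" "0 < s" "0 < B1" "B1 \<le> B2" "0 \<le> t"
  shows "cf_density q (p + q * B2) s (r + s * B2) t \<le> cf_density q (p + q * B1) s (r + s * B1) t"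
proof -
  have "0 < q * B1" "0 < s * B1" "0 \<le> q * t" "0 \<le> s * t"
    using assms by simp_all
  then have "0 < q * t + (p + q * B1)" "0 < s * t + (r + s * B1)"
    using assms by linarith+
  moreover have "q * t + (p + q * B1) \<le> q * t + (p + q * B2)" "s * t + (r + s * B1) \<le> s * t + (r + s * B2)"
    using assms by (auto intro: mult_left_mono)
  ultimately show ?thesis
    unfolding cf_density_def by (intro divide_left_mono mult_mono mult_pos_pos) auto
qed

definition occurrence_density :: "nat \<Rightarrow> nat \<Rightarrow> real \<Rightarrow> real \<Rightarrow> real \<Rightarrow> real \<Rightarrow> real \<Rightarrow> real" where
  "occurrence_density n z p q r s w =
     cf_density p q r s w * indicator irrationals_01 w * indicator {w. digit_occurs n z w} w"

definition occurrence_integral :: "nat \<Rightarrow> nat \<Rightarrow> real \<Rightarrow> real \<Rightarrow> real \<Rightarrow> real \<Rightarrow> ennreal" where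
  "occurrence_integral n z p q r s = (\<integral>\<^sup>+ w. ennreal (occurrence_density n z p q r s w) \<partial>lborel)"

definition density_integral :: "real \<Rightarrow> real \<Rightarrow> real \<Rightarrow> real \<Rightarrow> ennreal" where
  "density_integral p q r s = (\<integral>\<^sup>+ w. ennreal (cf_density p q r s w * indicator irrationals_01 w) \<partial>lborel)"

lemma occurrence_density_measurable [measurable]:
  "occurrence_density n z p q r s \<in> borel_measurable borel"
  unfolding occurrence_density_def cf_density_def by measurable

lemma occurrence_density_inverse_branch:
  fixes b :: nat
  assumes pqrs: "0 \<le> p" "0 < q" "0 \<le> r" "0 < s"
  defines "B \<equiv> real (Suc b)"
  shows "occurrence_density (Suc n) z p q r s (1 / (B + t)) / (B + t)\<^sup>2 * indicator {0..1} t
    = cf_density q (p + q * B) s (r + s * B) t * indicator irrationals_01 t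
      * (if Suc b = z \<or> digit_occurs n z t then 1 else 0)"
proof (cases "t \<in> irrationals_01")
  case True
  then have t: "0 < t" "t < 1" by (auto simp: irrationals_01_iff)
  then show ?thesis
    using True inverse_branch_irrationals_01_iff[of t b] inverse_branch_digit_occurs_Suc_iff[OF t]
      cf_density_inverse_branch[OF pqrs, of B t]
    by (auto simp: occurrence_density_def indicator_def B_def)
next
  case False
  then show ?thesis
    using inverse_branch_irrationals_01_iff[of t b]
    by (auto simp: occurrence_density_def indicator_def B_def)
qed

lemma occurrence_integral_Suc:
  assumes pqrs: "0 \<le> p" "0 < q" "0 \<le> r" "0 < s"
  shows "occurrence_integral (Suc n) z p q r s = (\<Sum>b. let B = real (Suc b) in
      if Suc b = z then density_integral q (p + q * B) s (r + s * B)
      else occurrence_integral n z q (p + q * B) s (r + s * B))"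
proof -
  have nonneg: "occurrence_density (Suc n) z p q r s w \<ge> 0" for w
    using cf_density_pos[OF pqrs, of w]
    by (auto simp: occurrence_density_def indicator_def irrationals_01_iff)
  have vanish: "w \<notin> irrationals_01 \<Longrightarrow> occurrence_density (Suc n) z p q r s w = 0" for w
    by (simp add: occurrence_density_def)
  have "occurrence_integral (Suc n) z p q r s = (\<Sum>b. \<integral>\<^sup>+ t. ennreal
      (occurrence_density (Suc n) z p q r s (1 / (real (Suc b) + t)) / (real (Suc b) + t)\<^sup>2
        * indicator {0..1} t) \<partial>lborel)"
    unfolding occurrence_integral_def
    by (rule nn_integral_first_digit_decomposition[OF occurrence_density_measurable nonneg vanish])
  also have "\<dots> = (\<Sum>b. let B = real (Suc b) in
      if Suc b = z then density_integral q (p + q * B) s (r + s * B)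
      else occurrence_integral n z q (p + q * B) s (r + s * B))"
    unfolding occurrence_density_inverse_branch[OF pqrs]
    by (intro arg_cong[where f = suminf] ext)
      (auto intro!: nn_integral_cong simp: occurrence_integral_def density_integral_def
        occurrence_density_def indicator_def Let_def)
  finally show ?thesis .
qed

lemma occurrence_integral_exchange:
  assumes pqrs: "0 \<le> p" "0 < q" "0 \<le> r" "0 < s" and B: "0 < B1" "B1 \<le> B2"
  shows "occurrence_integral n x q (p + q * B1) s (r + s * B1) + density_integral q (p + q * B2) s (r + s * B2)
     \<le> density_integral q (p + q * B1) s (r + s * B1) + occurrence_integral n x q (p + q * B2) s (r + s * B2)"
proof -
  let ?g1 = "cf_density q (p + q * B1) s (r + s * B1)"
  let ?g2 = "cf_density q (p + q * B2) s (r + s * B2)"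
  have pointwise: "ennreal (occurrence_density n x q (p + q * B1) s (r + s * B1) w)
        + ennreal (?g2 w * indicator irrationals_01 w)
     \<le> ennreal (?g1 w * indicator irrationals_01 w)
        + ennreal (occurrence_density n x q (p + q * B2) s (r + s * B2) w)" for w
  proof (cases "w \<in> irrationals_01")
    case True
    then have "0 \<le> w" by (simp add: irrationals_01_iff)
    have "0 < q * B1" "0 < s * B1" "0 < q * B2" "0 < s * B2"
      using pqrs B by simp_all
    then have "0 < p + q * B1" "0 < r + s * B1" "0 < p + q * B2" "0 < r + s * B2"
      using pqrs by linarith+
    then have "0 \<le> ?g1 w" "0 \<le> ?g2 w"
      using cf_density_pos[of q _ s _ w] pqrs \<open>0 \<le> w\<close> by (simp_all add: less_imp_le)
    moreover have "?g2 w \<le> ?g1 w"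
      using cf_density_shift_antimono[OF pqrs B \<open>0 \<le> w\<close>] .
    ultimately show ?thesis
      using True by (cases "digit_occurs n x w") (simp_all add: occurrence_density_def add.commute ennreal_leI)
  qed (simp add: occurrence_density_def)
  have "occurrence_integral n x q (p + q * B1) s (r + s * B1) + density_integral q (p + q * B2) s (r + s * B2)
     = (\<integral>\<^sup>+ w. ennreal (occurrence_density n x q (p + q * B1) s (r + s * B1) w)
        + ennreal (?g2 w * indicator irrationals_01 w) \<partial>lborel)"
    unfolding occurrence_integral_def density_integral_def
    by (rule nn_integral_add[symmetric]) (auto simp: cf_density_def)
  also have "\<dots> \<le> (\<integral>\<^sup>+ w. ennreal (?g1 w * indicator irrationals_01 w)
        + ennreal (occurrence_density n x q (p + q * B2) s (r + s * B2) w) \<partial>lborel)"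
    by (rule nn_integral_mono) (rule pointwise)
  also have "\<dots> = density_integral q (p + q * B1) s (r + s * B1) + occurrence_integral n x q (p + q * B2) s (r + s * B2)"
    unfolding occurrence_integral_def density_integral_def
    by (rule nn_integral_add) (auto simp: cf_density_def)
  finally show ?thesis .
qed

lemma occurrence_integral_antimono:
  assumes "1 \<le> x" "x \<le> y" and "0 \<le> p" "0 < q" "0 \<le> r" "0 < s"
  shows "occurrence_integral n y p q r s \<le> occurrence_integral n x p q r s"
  using assms(3-)
proof (induction n arbitrary: p q r s)
  case 0
  then show ?case by (simp add: occurrence_integral_def occurrence_density_def)
next
  case (Suc n)
  note pqrs = Suc.prems
  define P R where "P b = p + q * real (Suc b)" and "R b = r + s * real (Suc b)" for b
  have PR: "0 < P b" "0 < R b" for b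
    using pqrs unfolding P_def R_def by (auto intro: add_nonneg_pos)
  define A where "A z b = (if Suc b = z then density_integral q (P b) s (R b)
      else occurrence_integral n z q (P b) s (R b))" for z b
  define L where "L b = (if Suc b = y then density_integral q (P b) s (R b)
      else occurrence_integral n x q (P b) s (R b))" for b
  have expand: "occurrence_integral (Suc n) z p q r s = suminf (A z)" for z
    unfolding occurrence_integral_Suc[OF pqrs] A_def P_def R_def Let_def ..
  have "A y b \<le> L b" for b
    using Suc.IH[OF less_imp_le[OF pqrs(2)] PR(1) less_imp_le[OF pqrs(4)] PR(2)]
    unfolding A_def L_def by simp
  then have "suminf (A y) \<le> suminf L"
    by (intro suminf_le) (auto intro: summableI)
  also have "suminf L \<le> suminf (A x)"
  proof (cases "x = y")
    case True
    then have "L = A x" by (simp add: fun_eq_iff A_def L_def)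
    then show ?thesis by simp
  next
    case False
    define i j where "i = x - 1" and "j = y - 1"
    have ij: "i \<noteq> j" "Suc i = x" "Suc j = y"
      using assms False unfolding i_def j_def by auto
    have "L i + L j \<le> A x i + A x j"
      using occurrence_integral_exchange[OF pqrs, of "real x" "real y"] assms False
      unfolding A_def L_def P_def R_def ij(2,3) by (simp add: add.commute)
    moreover have "(\<Sum>b. if b = i \<or> b = j then 0 else L b) = (\<Sum>b. if b = i \<or> b = j then 0 else A x b)"
      by (rule arg_cong[where f = suminf]) (auto simp: A_def L_def ij(2,3)[symmetric])
    ultimately show ?thesis
      unfolding suminf_ennreal_split2[OF ij(1), of L] suminf_ennreal_split2[OF ij(1), of "A x"]
      by (simp add: add_right_mono)
  qed
  finally show ?case
    unfolding expand .
qed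

lemma gauss_measure_digit_event:
  "emeasure gauss_measure {w \<in> {0<..<1}. w \<notin> \<rat> \<and> N_count n z w \<ge> 1}
    = occurrence_integral n z 0 (ln 2) 1 1"
proof -
  have event: "{w \<in> {0<..<1}. w \<notin> \<rat> \<and> N_count n z w \<ge> 1} = irrationals_01 \<inter> {w. digit_occurs n z w}"
    unfolding N_count_ge_1_iff irrationals_01_def by auto
  have "irrationals_01 \<inter> {w. digit_occurs n z w} \<in> sets lborel"
    by simp
  then have "emeasure gauss_measure (irrationals_01 \<inter> {w. digit_occurs n z w})
      = (\<integral>\<^sup>+ w. ennreal (indicator {0<..<1} w / (ln 2 * (1 + w)))
          * indicator (irrationals_01 \<inter> {w. digit_occurs n z w}) w \<partial>lborel)"
    unfolding gauss_measure_def by (rule emeasure_density[rotated]) measurable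
  also have "\<dots> = occurrence_integral n z 0 (ln 2) 1 1"
    unfolding occurrence_integral_def occurrence_density_def cf_density_def
    by (intro nn_integral_cong) (auto simp: indicator_def irrationals_01_iff algebra_simps)
  finally show ?thesis
    unfolding event .
qed

lemma occurrence_integral_gauss_finite: "occurrence_integral n z 0 (ln 2) 1 1 < \<infinity>"
proof -
  have bound: "ennreal (occurrence_density n z 0 (ln 2) 1 1 w) \<le> ennreal (1 / ln 2) * indicator {0<..<1} w" for w
  proof (cases "w \<in> irrationals_01")
    case True
    then have "0 < w" "w < 1" by (auto simp: irrationals_01_iff)
    then have "ln 2 \<le> (0 * w + ln 2) * (1 * w + 1)"
      by (simp add: algebra_simps)
    then have "cf_density 0 (ln 2) 1 1 w \<le> 1 / ln 2"
      unfolding cf_density_def by (intro divide_left_mono) auto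
    then show ?thesis
      using \<open>0 < w\<close> \<open>w < 1\<close> by (auto simp: occurrence_density_def indicator_def intro: ennreal_leI)
  qed (simp add: occurrence_density_def)
  have "occurrence_integral n z 0 (ln 2) 1 1 \<le> (\<integral>\<^sup>+ w. ennreal (1 / ln 2) * indicator {0<..<1::real} w \<partial>lborel)"
    unfolding occurrence_integral_def by (rule nn_integral_mono) (rule bound)
  also have "\<dots> = ennreal (1 / ln 2) * emeasure lborel {0<..<1::real}"
    by (rule nn_integral_cmult_indicator) simp
  also have "\<dots> < \<infinity>" by (simp add: ennreal_mult_less_top)
  finally show ?thesis .
qed

theorem lemma6:
  fixes n x y :: nat
  assumes "n \<ge> 1" and "1 \<le> x" and "x \<le> y"
  shows "measure gauss_measure {w \<in> {0<..<1}. w \<notin> \<rat> \<and> N_count n y w \<ge> 1}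
         \<le> measure gauss_measure {w \<in> {0<..<1}. w \<notin> \<rat> \<and> N_count n x w \<ge> 1}"
proof -
  have "occurrence_integral n y 0 (ln 2) 1 1 \<le> occurrence_integral n x 0 (ln 2) 1 1"
    using assms(2,3) by (rule occurrence_integral_antimono) auto
  then show ?thesis
    unfolding measure_def gauss_measure_digit_event
    using occurrence_integral_gauss_finite by (intro enn2real_mono) auto
qed

end
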